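(* Let $\varepsilon>0$, $\Omega\subset\mathbb{R}^2$ bounded open, $u\in\mathcal{SF}_\varepsilon(\Omega)$ and $R\in\mathcal{R}_\varepsilon(u)$. Then $u(\mathcal{L}_\varepsilon(R))$ contains at most four points.
   Context: $\mathcal{L}=\{ae_1+b\hat e_2:a,b\in\mathbb{Z}\}$ with $e_1=(1,0)$, $\hat e_2=\frac12(1,\sqrt3)$, $\mathcal{L}_\varepsilon=\varepsilon\mathcal{L}$, $\mathcal{L}_\varepsilon(R)=\mathcal{L}_\varepsilon\cap R$; $\mathcal{T}_\varepsilon$ is the set of closed triangles with vertices in $\mathcal{L}_\varepsilon$ pairwise at distance $\varepsilon$; $\mathcal{E}_\varepsilon$ the set of segments $[i,j]$, $i,j\in\mathcal{L}_\varepsilon$, $|i-j|=\varepsilon$. $n=(0,0,1)$; $\mathcal{SF}_\varepsilon(\Omega)$ is the set of $u:\mathcal{L}_\varepsilon\to\mathbb{S}^2$ with $u=n$ on $\mathcal{L}_\varepsilon\setminus\Omega$. $\mathcal{N}_\varepsilon(u)=\{[i,j]\in\mathcal{E}_\varepsilon:u(i)=-u(j)\}$. Two triangles of $\mathcal{T}_\varepsilon$ are neighbours if their intersection is an edge in $\mathcal{N}_\varepsilon(u)$, and connected if joined by a finite chain of consecutive neighbours. $\mathcal{R}_\varepsilon(u)$ is the set of admissible interpolation regions: unions of pairwise connected triangles of $\mathcal{T}_\varepsilon$ that are maximal with respect to inclusion. *)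

theory Defs
  imports "HOL-Analysis.Analysis"
begin

type_synonym pt = "real \<times> real"
type_synonym spin = "real \<times> real \<times> real"

definition lattice :: "real \<Rightarrow> pt set" where
  "lattice eps = {(eps * (of_int a + of_int b / 2), eps * (of_int b * sqrt 3 / 2)) | a b. True}"

definition north :: spin where "north = (0, 0, 1)"

definition SF :: "real \<Rightarrow> pt set \<Rightarrow> (pt \<Rightarrow> spin) set" where
  "SF eps \<Omega> = {u. (\<forall>i\<in>lattice eps. u i \<in> sphere 0 1) \<and>
                   (\<forall>i\<in>lattice eps - \<Omega>. u i = north)}"

definition triangles :: "real \<Rightarrow> pt set set" where
  "triangles eps = {convex hull {i, j, k} | i j k.
      i \<in> lattice eps \<and> j \<in> lattice eps \<and> k \<in> lattice eps \<and>
      dist i j = eps \<and> dist j k = eps \<and> dist i k = eps}"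

definition edges :: "real \<Rightarrow> pt set set" where
  "edges eps = {closed_segment i j | i j. i \<in> lattice eps \<and> j \<in> lattice eps \<and> dist i j = eps}"

definition frustrated_edges :: "real \<Rightarrow> (pt \<Rightarrow> spin) \<Rightarrow> pt set set" where
  "frustrated_edges eps u = {closed_segment i j | i j.
      i \<in> lattice eps \<and> j \<in> lattice eps \<and> dist i j = eps \<and> u i = - u j}"

definition tri_neighbours :: "real \<Rightarrow> (pt \<Rightarrow> spin) \<Rightarrow> pt set \<Rightarrow> pt set \<Rightarrow> bool" where
  "tri_neighbours eps u T1 T2 \<longleftrightarrow> T1 \<in> triangles eps \<and> T2 \<in> triangles eps \<and>
      T1 \<inter> T2 \<in> frustrated_edges eps u"

definition tri_connected :: "real \<Rightarrow> (pt \<Rightarrow> spin) \<Rightarrow> pt set \<Rightarrow> pt set \<Rightarrow> bool" where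
  "tri_connected eps u T1 T2 \<longleftrightarrow> (tri_neighbours eps u)\<^sup>*\<^sup>* T1 T2"

definition pw_connected_family :: "real \<Rightarrow> (pt \<Rightarrow> spin) \<Rightarrow> pt set set \<Rightarrow> bool" where
  "pw_connected_family eps u C \<longleftrightarrow> C \<subseteq> triangles eps \<and>
      (\<forall>T1\<in>C. \<forall>T2\<in>C. tri_connected eps u T1 T2)"

definition admissible_regions :: "real \<Rightarrow> (pt \<Rightarrow> spin) \<Rightarrow> pt set set" where
  "admissible_regions eps u = {\<Union>C | C. pw_connected_family eps u C \<and>
      (\<forall>C'. pw_connected_family eps u C' \<and> \<Union>C \<subseteq> \<Union>C' \<longrightarrow> \<Union>C' = \<Union>C)}"

end

theory Submission
  imports Defs
begin

(* Two
   lattice points at distance eps lie on at most two lattice triangles, and the spins are nonzero,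
   so not all three edges of a triangle are frustrated: every triangle has at most two neighbours.
   Fix a frustrated edge with spins w and - w. Crossing a frustrated edge keeps both w and - w among
   the three spins of a triangle (otherwise that triangle would carry four distinct values), so by
   connectedness every triangle of R carries w and - w, hence at most one further "exotic" value;
   and a triangle with an exotic vertex has at most one neighbour, since its only frustrated edge
   is the one joining w to - w. In a connected graph of maximum degree two at most two vertices
   have degree at most one, so at most two exotic values occur and u takes at most four values. *)

section \<open>Graphs of maximum degree two\<close>

definition bfs_layer :: "('a \<Rightarrow> 'a \<Rightarrow> bool) \<Rightarrow> 'a \<Rightarrow> nat \<Rightarrow> 'a set" where
  "bfs_layer N x k = {y. (N ^^ k) x y \<and> (\<forall>j<k. \<not> (N ^^ j) x y)}"

lemma bfs_layer_0 [simp]: "bfs_layer N x 0 = {x}"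
  by (auto simp: bfs_layer_def)

lemma bfs_layer_index_unique:
  assumes "y \<in> bfs_layer N x k" "y \<in> bfs_layer N x k'"
  shows "k = k'"
proof (rule ccontr)
  assume "k \<noteq> k'"
  then consider "k < k'" | "k' < k" by linarith
  then show False using assms unfolding bfs_layer_def by cases blast+
qed

lemma bfs_layer_SucE:
  assumes "y \<in> bfs_layer N x (Suc k)"
  obtains b where "b \<in> bfs_layer N x k" "N b y"
proof -
  from assms obtain b where b: "(N ^^ k) x b" "N b y" and min: "\<forall>j<Suc k. \<not> (N ^^ j) x y"
    by (auto simp: bfs_layer_def)
  have "\<not> (N ^^ j) x b" if "j < k" for j
    using min that b(2) by (meson Suc_mono relpowp_Suc_I)
  with b that show thesis by (auto simp: bfs_layer_def)
qed

lemma rtranclp_imp_bfs_layer: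
  assumes "N\<^sup>*\<^sup>* x y"
  obtains k where "y \<in> bfs_layer N x k"
proof -
  have ex: "\<exists>k. (N ^^ k) x y" using rtranclp_imp_relpowp[OF assms] by blast
  have "y \<in> bfs_layer N x (LEAST k. (N ^^ k) x y)"
    using LeastI_ex[OF ex] not_less_Least by (auto simp: bfs_layer_def)
  then show thesis by (rule that)
qed

lemma bfs_layer_empty_mono:
  assumes "bfs_layer N x k = {}" "k \<le> k'"
  shows "bfs_layer N x k' = {}"
  using assms(2)
proof (induction k' rule: dec_induct)
  case (step k')
  then show ?case by (metis bfs_layer_SucE empty_iff equals0I)
qed (use assms(1) in simp)

context
  fixes N :: "'a \<Rightarrow> 'a \<Rightarrow> bool" and x :: 'a
  assumes sym: "symp N"
    and max_degree_2: "\<And>b y1 y2 y3. N b y1 \<Longrightarrow> N b y2 \<Longrightarrow> N b y3 \<Longrightarrow> y1 = y2 \<or> y1 = y3 \<or> y2 = y3"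
    and leaf: "\<exists>\<^sub>\<le>\<^sub>1 a. N x a"
begin

lemma bfs_layer_from_leaf_subsingleton:
  "y \<in> bfs_layer N x k \<Longrightarrow> z \<in> bfs_layer N x k \<Longrightarrow> y = z"
proof (induction k arbitrary: y z rule: less_induct)
  case (less k)
  consider "k = 0" | "k = 1" | n where "k = Suc (Suc n)"
    by (metis One_nat_def not0_implies_Suc)
  then show ?case
  proof cases
    case 1
    with less.prems show ?thesis by simp
  next
    case 2
    with less.prems leaf show ?thesis
      by (auto simp: bfs_layer_def elim: Uniq_D)
  next
    case 3
    obtain b where b: "b \<in> bfs_layer N x (Suc n)" "N b y"
      using less.prems(1) 3 by (auto elim: bfs_layer_SucE)
    obtain b' where b': "b' \<in> bfs_layer N x (Suc n)" "N b' z"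
      using less.prems(2) 3 by (auto elim: bfs_layer_SucE)
    obtain a where a: "a \<in> bfs_layer N x n" "N a b"
      using b(1) by (auto elim: bfs_layer_SucE)
    have "b' = b" using less.IH[of "Suc n"] 3 b b' by blast
    with b' have "N b z" by simp
    moreover have "a \<noteq> y" "a \<noteq> z"
      using bfs_layer_index_unique[of _ N x n "Suc (Suc n)"] a(1) less.prems 3 by auto
    ultimately show ?thesis
      using max_degree_2[OF b(2) _ sympD[OF sym a(2)]] by blast
  qed
qed

lemma bfs_layer_Suc_empty_at_leaf:
  assumes y: "y \<in> bfs_layer N x k" "0 < k" "\<exists>\<^sub>\<le>\<^sub>1 a. N y a"
  shows "bfs_layer N x (Suc k) = {}"
proof (rule ccontr)
  assume "bfs_layer N x (Suc k) \<noteq> {}"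
  then obtain z where z: "z \<in> bfs_layer N x (Suc k)" by blast
  then obtain b where b: "b \<in> bfs_layer N x k" "N b z" by (rule bfs_layer_SucE)
  obtain k0 where k0: "k = Suc k0" using y(2) not0_implies_Suc by blast
  obtain a where a: "a \<in> bfs_layer N x k0" "N a y" using y(1) k0 by (auto elim: bfs_layer_SucE)
  have "b = y" using bfs_layer_from_leaf_subsingleton b(1) y(1) by blast
  then have "a = z" using y(3) sympD[OF sym a(2)] b(2) by (auto elim: Uniq_D)
  then show False using bfs_layer_index_unique[of a N x k0 "Suc k"] a(1) z k0 by simp
qed

lemma leaf_reachable_from_leaf_unique:
  assumes "N\<^sup>*\<^sup>* x y" "y \<noteq> x" "\<exists>\<^sub>\<le>\<^sub>1 a. N y a"
    and "N\<^sup>*\<^sup>* x z" "z \<noteq> x" "\<exists>\<^sub>\<le>\<^sub>1 a. N z a"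
  shows "y = z"
proof -
  obtain ky where ky: "y \<in> bfs_layer N x ky" using assms(1) by (rule rtranclp_imp_bfs_layer)
  obtain kz where kz: "z \<in> bfs_layer N x kz" using assms(4) by (rule rtranclp_imp_bfs_layer)
  have "0 < ky" "0 < kz" using ky kz assms(2,5) by (auto intro: gr0I)
  have "\<not> ky < kz"
    using bfs_layer_empty_mono[OF bfs_layer_Suc_empty_at_leaf[OF ky \<open>0 < ky\<close> assms(3)], of kz] kz
    by auto
  moreover have "\<not> kz < ky"
    using bfs_layer_empty_mono[OF bfs_layer_Suc_empty_at_leaf[OF kz \<open>0 < kz\<close> assms(6)], of ky] ky
    by auto
  ultimately have "ky = kz" by simp
  then show ?thesis using bfs_layer_from_leaf_subsingleton ky kz by blast
qed

end

section \<open>Antipodal pairs of values\<close>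

definition antipodal_pairs :: "('a \<Rightarrow> 'b::group_add) \<Rightarrow> 'a set \<Rightarrow> 'a set set" where
  "antipodal_pairs f V = {{p, q} | p q. p \<in> V \<and> q \<in> V \<and> p \<noteq> q \<and> f p = - f q}"

lemma antipodal_pairs_of_triple_cases:
  fixes f :: "'a \<Rightarrow> 'b::group_add"
  assumes "e \<in> antipodal_pairs f {a, b, c}"
  shows "(e = {a, b} \<and> f a = - f b) \<or> (e = {b, c} \<and> f b = - f c) \<or> (e = {a, c} \<and> f a = - f c)"
  using assms unfolding antipodal_pairs_def by (auto simp: insert_commute)

lemma antipodal_pairs_of_triple:
  fixes f :: "'a \<Rightarrow> 'b::group_add"
  assumes "\<And>x. x \<in> {a, b, c} \<Longrightarrow> f x \<noteq> - f x"
    and "e1 \<in> antipodal_pairs f {a, b, c}" "e2 \<in> antipodal_pairs f {a, b, c}"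
      "e3 \<in> antipodal_pairs f {a, b, c}"
  shows "e1 = e2 \<or> e1 = e3 \<or> e2 = e3"
proof -
  have not_all: "\<not> (f a = - f b \<and> f b = - f c \<and> f a = - f c)"
  proof
    assume "f a = - f b \<and> f b = - f c \<and> f a = - f c"
    then have "f c = - f c" by (metis minus_minus)
    then show False using assms(1)[of c] by simp
  qed
  show ?thesis
    using antipodal_pairs_of_triple_cases[OF assms(2)] antipodal_pairs_of_triple_cases[OF assms(3)]
      antipodal_pairs_of_triple_cases[OF assms(4)] not_all
    by metis
qed

lemma triple_with_antipodal_values:
  fixes f :: "'a \<Rightarrow> 'b::group_add"
  assumes "card V = 3" "w \<in> f ` V" "- w \<in> f ` V" "w \<noteq> - w" "x \<in> V" "f x \<notin> {w, - w}"
  obtains y z where "V = {x, y, z}" "f y = w" "f z = - w"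
proof -
  obtain y z where yz: "y \<in> V" "f y = w" "z \<in> V" "f z = - w"
    using assms(2,3) by (metis imageE)
  have "x \<noteq> y" "x \<noteq> z" "y \<noteq> z" using yz assms(4,6) by auto
  then have card_eq: "card {x, y, z} = card V" using assms(1) by simp
  have fin: "finite V" using assms(1) by (intro card_ge_0_finite) simp
  have sub: "{x, y, z} \<subseteq> V" using yz assms(5) by simp
  have "V = {x, y, z}" using card_subset_eq[OF fin sub card_eq] by (rule sym)
  then show thesis using yz(2,4) by (rule that)
qed

lemma exotic_vertex_unique:
  fixes f :: "'a \<Rightarrow> 'b::group_add"
  assumes "card V = 3" "w \<in> f ` V" "- w \<in> f ` V" "w \<noteq> - w"
    and "x \<in> V" "f x \<notin> {w, - w}" "x' \<in> V" "f x' \<notin> {w, - w}"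
  shows "x' = x"
proof -
  obtain y z where "V = {x, y, z}" "f y = w" "f z = - w"
    using triple_with_antipodal_values[OF assms(1-6)] by blast
  then show ?thesis using assms(7,8) by auto
qed

lemma antipodal_pairs_avoid_exotic:
  fixes f :: "'a \<Rightarrow> 'b::group_add"
  assumes "card V = 3" "w \<in> f ` V" "- w \<in> f ` V" "w \<noteq> - w"
    and "x \<in> V" "f x \<notin> {w, - w}" "e \<in> antipodal_pairs f V"
  shows "e = V - {x}"
proof -
  obtain y z where V: "V = {x, y, z}" and y: "f y = w" and z: "f z = - w"
    using triple_with_antipodal_values[OF assms(1-6)] by blast
  obtain p q where e: "e = {p, q}" "p \<in> V" "q \<in> V" "p \<noteq> q" "f p = - f q"
    using assms(7) unfolding antipodal_pairs_def by blast
  have not_antipodal_to_x: "f x \<noteq> - f v" if "v \<in> V" "v \<noteq> x" for v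
    using that assms(6) y z unfolding V by auto
  have "p \<noteq> x" using not_antipodal_to_x[OF e(3)] e(4,5) by blast
  moreover have "q \<noteq> x" using not_antipodal_to_x[OF e(2)] e(4,5) by (metis minus_minus)
  ultimately have "p \<in> {y, z}" "q \<in> {y, z}" using e(2,3) unfolding V by blast+
  then have "e = {y, z}" using e(1,4) by blast
  moreover have "V - {x} = {y, z}" using V y z assms(6) by auto
  ultimately show ?thesis by simp
qed

lemma finite_card_le_2_if_no_three_distinct:
  assumes "\<And>x1 x2 x3. x1 \<in> X \<Longrightarrow> x2 \<in> X \<Longrightarrow> x3 \<in> X \<Longrightarrow> x1 = x2 \<or> x1 = x3 \<or> x2 = x3"
  shows "finite X \<and> card X \<le> 2"
proof -
  obtain x1 x2 where "X \<subseteq> {x1, x2}"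
  proof (cases "\<exists>x1 x2. x1 \<in> X \<and> x2 \<in> X \<and> x1 \<noteq> x2")
    case True
    then obtain x1 x2 where "x1 \<in> X" "x2 \<in> X" "x1 \<noteq> x2" by blast
    then have "X \<subseteq> {x1, x2}" using assms by fastforce
    then show thesis by (rule that)
  next
    case False
    then have "X \<subseteq> {x, x}" if "x \<in> X" for x using that by blast
    then show thesis using that by (cases "X = {}") blast+
  qed
  moreover have "card {x1, x2} \<le> 2" by (simp add: card_insert_if)
  ultimately show ?thesis by (meson card_mono finite.emptyI finite.insertI finite_subset le_trans)
qed

section \<open>Plane geometry\<close>

lemma barycentric_dist_identity:
  fixes i j k :: "'a::real_inner"
  assumes "\<alpha> + \<beta> + \<gamma> = 1" and "x = \<alpha> *\<^sub>R i + \<beta> *\<^sub>R j + \<gamma> *\<^sub>R k"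
  shows "\<alpha> * (dist x i)\<^sup>2 + \<beta> * (dist x j)\<^sup>2 + \<gamma> * (dist x k)\<^sup>2
       = \<alpha> * \<beta> * (dist i j)\<^sup>2 + \<beta> * \<gamma> * (dist j k)\<^sup>2 + \<alpha> * \<gamma> * (dist i k)\<^sup>2"
proof -
  have \<gamma>: "\<gamma> = 1 - \<alpha> - \<beta>" using assms(1) by simp
  show ?thesis unfolding assms(2) \<gamma>
    by (simp add: dist_norm power2_norm_eq_inner inner_commute algebra_simps)
qed

lemma equilateral_hull_near_vertex:
  fixes i j k x :: "'a::real_inner"
  assumes "e > 0" "dist i j = e" "dist j k = e" "dist i k = e" "x \<in> convex hull {i, j, k}"
  shows "\<exists>v\<in>{i, j, k}. dist x v < e"
proof (rule ccontr)
  assume "\<not> ?thesis"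
  then have far: "e\<^sup>2 \<le> (dist x v)\<^sup>2" if "v \<in> {i, j, k}" for v
    using that assms(1) by (auto intro!: power_mono)
  obtain \<alpha> \<beta> \<gamma> where nonneg: "0 \<le> \<alpha>" "0 \<le> \<beta>" "0 \<le> \<gamma>" and sum: "\<alpha> + \<beta> + \<gamma> = 1"
    and x: "x = \<alpha> *\<^sub>R i + \<beta> *\<^sub>R j + \<gamma> *\<^sub>R k"
    using assms(5) unfolding convex_hull_3 by auto
  have "e\<^sup>2 = (\<alpha> + \<beta> + \<gamma>) * e\<^sup>2" using sum by simp
  also have "\<dots> \<le> \<alpha> * (dist x i)\<^sup>2 + \<beta> * (dist x j)\<^sup>2 + \<gamma> * (dist x k)\<^sup>2"
    unfolding distrib_right using far nonneg by (intro add_mono mult_left_mono) auto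
  also have "\<dots> = (\<alpha> * \<beta> + \<beta> * \<gamma> + \<alpha> * \<gamma>) * e\<^sup>2"
    unfolding barycentric_dist_identity[OF sum x] assms(2-4) by (simp add: algebra_simps)
  also have "\<dots> \<le> (1/3) * e\<^sup>2"
  proof (rule mult_right_mono)
    have "0 \<le> (\<alpha> - \<beta>)\<^sup>2 + (\<beta> - \<gamma>)\<^sup>2 + (\<alpha> - \<gamma>)\<^sup>2" by simp
    moreover have "(\<alpha> + \<beta> + \<gamma>)\<^sup>2 = 1" using sum by simp
    ultimately show "\<alpha> * \<beta> + \<beta> * \<gamma> + \<alpha> * \<gamma> \<le> 1/3" by (simp add: algebra_simps power2_eq_square)
  qed simp
  finally show False using assms(1) by simp
qed

lemma dist_pt_power2: "(dist p q)\<^sup>2 = (fst p - fst q)\<^sup>2 + (snd p - snd q)\<^sup>2" for p q :: pt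
  by (simp add: dist_prod_def dist_real_def)

lemma two_circles_at_most_two_common_points:
  fixes i j a b c :: pt
  assumes "i \<noteq> j"
    and "dist a i = r" "dist b i = r" "dist c i = r"
    and "dist a j = s" "dist b j = s" "dist c j = s"
  shows "a = b \<or> a = c \<or> b = c"
proof -
  define d1 d2 where "d1 = fst j - fst i" and "d2 = snd j - snd i"
  define E where "E = d1\<^sup>2 + d2\<^sup>2"
  \<comment> \<open>dot and cross product of p - i with j - i: the two radii fix dt p, and cr p up to sign\<close>
  define dt cr where "dt p = (fst p - fst i) * d1 + (snd p - snd i) * d2"
    and "cr p = (fst p - fst i) * d2 - (snd p - snd i) * d1" for p :: pt
  have "E \<noteq> 0" using assms(1) by (auto simp: E_def d1_def d2_def prod_eq_iff)
  have coords_inj: "p = q" if "dt p = dt q" "cr p = cr q" for p q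
  proof -
    have "(fst p' - fst i) * E = dt p' * d1 + cr p' * d2"
      and "(snd p' - snd i) * E = dt p' * d2 - cr p' * d1" for p'
      unfolding dt_def cr_def E_def by (simp_all add: algebra_simps power2_eq_square)
    then have "(fst p - fst i) * E = (fst q - fst i) * E"
      and "(snd p - snd i) * E = (snd q - snd i) * E"
      using that by simp_all
    then show ?thesis using \<open>E \<noteq> 0\<close> by (simp add: prod_eq_iff)
  qed
  have dt_eq: "dt p = (E + r\<^sup>2 - s\<^sup>2) / 2" if "dist p i = r" "dist p j = s" for p
  proof -
    have "s\<^sup>2 = r\<^sup>2 - 2 * dt p + E"
      unfolding that[symmetric] dist_pt_power2 dt_def E_def d1_def d2_def
      by (simp add: power2_eq_square algebra_simps)
    then show ?thesis by simp
  qed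
  have cr_sq: "(cr p)\<^sup>2 = r\<^sup>2 * E - (dt p)\<^sup>2" if "dist p i = r" for p
  proof -
    have "(cr p)\<^sup>2 + (dt p)\<^sup>2 = r\<^sup>2 * E"
      unfolding that[symmetric] dist_pt_power2 dt_def cr_def E_def
      by (simp add: power2_eq_square algebra_simps)
    then show ?thesis by simp
  qed
  have dts: "dt a = dt b" "dt a = dt c" "dt b = dt c"
    using dt_eq[OF assms(2,5)] dt_eq[OF assms(3,6)] dt_eq[OF assms(4,7)] by simp_all
  have "(cr a)\<^sup>2 = (cr b)\<^sup>2" "(cr a)\<^sup>2 = (cr c)\<^sup>2"
    using cr_sq[OF assms(2)] cr_sq[OF assms(3)] cr_sq[OF assms(4)] dts by simp_all
  then have "cr a = cr b \<or> cr a = cr c \<or> cr b = cr c"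
    unfolding power2_eq_iff by auto
  then show ?thesis using coords_inj[of a b] coords_inj[of a c] coords_inj[of b c] dts by blast
qed

section \<open>The triangular lattice\<close>

lemma eisenstein_norm_ge_1:
  fixes m n :: int
  assumes "m \<noteq> 0 \<or> n \<noteq> 0"
  shows "1 \<le> m\<^sup>2 + m * n + n\<^sup>2"
proof -
  have "2 * (m\<^sup>2 + m * n + n\<^sup>2) = m\<^sup>2 + n\<^sup>2 + (m + n)\<^sup>2" by (simp add: algebra_simps power2_eq_square)
  moreover have "0 < m\<^sup>2 + n\<^sup>2" using assms by (auto simp: sum_power2_gt_zero_iff)
  ultimately show ?thesis by (smt (verit) zero_le_power2)
qed

lemma lattice_dist_ge:
  assumes "eps > 0" "p \<in> lattice eps" "q \<in> lattice eps" "p \<noteq> q"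
  shows "eps \<le> dist p q"
proof -
  obtain a b c d :: int where
    p: "p = (eps * (a + b / 2), eps * (b * sqrt 3 / 2))" and
    q: "q = (eps * (c + d / 2), eps * (d * sqrt 3 / 2))"
    using assms(2,3) unfolding lattice_def by blast
  define m n where "m = a - c" and "n = b - d"
  have "m \<noteq> 0 \<or> n \<noteq> 0"
  proof (rule ccontr)
    assume "\<not> ?thesis"
    then have "a = c" "b = d" unfolding m_def n_def by simp_all
    then show False using assms(4) unfolding p q by simp
  qed
  then have norm: "1 \<le> real_of_int (m\<^sup>2 + m * n + n\<^sup>2)"
    by (metis eisenstein_norm_ge_1 of_int_1_le_iff)
  have diff: "fst p - fst q = eps * (m + n / 2)" "snd p - snd q = eps * n * sqrt 3 / 2"
    unfolding p q m_def n_def by (simp_all add: field_simps)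
  have dist_sq: "(dist p q)\<^sup>2 = eps\<^sup>2 * real_of_int (m\<^sup>2 + m * n + n\<^sup>2)"
    unfolding dist_pt_power2 diff by (simp add: power_mult_distrib power2_eq_square algebra_simps)
  have "eps\<^sup>2 * 1 \<le> eps\<^sup>2 * real_of_int (m\<^sup>2 + m * n + n\<^sup>2)"
    by (rule mult_left_mono[OF norm zero_le_power2])
  then have "eps\<^sup>2 \<le> (dist p q)\<^sup>2" by (simp only: mult_1_right dist_sq)
  then show ?thesis by (rule power2_le_imp_le[OF _ zero_le_dist])
qed

lemma lattice_inter_equilateral_hull:
  assumes "eps > 0" "i \<in> lattice eps" "j \<in> lattice eps" "k \<in> lattice eps"
    and "dist i j = eps" "dist j k = eps" "dist i k = eps"
  shows "lattice eps \<inter> convex hull {i, j, k} = {i, j, k}"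
proof
  show "lattice eps \<inter> convex hull {i, j, k} \<subseteq> {i, j, k}"
  proof
    fix x assume x: "x \<in> lattice eps \<inter> convex hull {i, j, k}"
    then obtain v where "v \<in> {i, j, k}" "dist x v < eps"
      using equilateral_hull_near_vertex[OF assms(1,5-7)] by blast
    moreover have "v \<in> lattice eps" using \<open>v \<in> {i, j, k}\<close> assms(2-4) by blast
    ultimately have "x = v" using lattice_dist_ge[OF assms(1), of x v] x by fastforce
    then show "x \<in> {i, j, k}" using \<open>v \<in> {i, j, k}\<close> by simp
  qed
  show "{i, j, k} \<subseteq> lattice eps \<inter> convex hull {i, j, k}"
    using assms(2-4) by (auto intro: hull_inc)
qed

lemma lattice_inter_closed_segment:
  assumes "eps > 0" "p \<in> lattice eps" "q \<in> lattice eps" "dist p q = eps"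
  shows "lattice eps \<inter> closed_segment p q = {p, q}"
proof
  show "lattice eps \<inter> closed_segment p q \<subseteq> {p, q}"
  proof
    fix x assume x: "x \<in> lattice eps \<inter> closed_segment p q"
    show "x \<in> {p, q}"
    proof (rule ccontr)
      assume "x \<notin> {p, q}"
      then have "x \<in> open_segment p q" using x by (simp add: open_segment_def)
      then have "dist x p < eps" using dist_in_open_segment assms(4) by blast
      then show False using lattice_dist_ge[OF assms(1), of x p] x assms(2) \<open>x \<notin> {p, q}\<close> by auto
    qed
  qed
qed (use assms(2,3) in auto)

lemma triangle_vertices:
  assumes "eps > 0" "T \<in> triangles eps"
  obtains i j k where "T = convex hull {i, j, k}" "lattice eps \<inter> T = {i, j, k}"
    "dist i j = eps" "dist j k = eps" "dist i k = eps"
proof -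
  from assms(2) obtain i j k where T: "T = convex hull {i, j, k}"
    and ijk: "i \<in> lattice eps" "j \<in> lattice eps" "k \<in> lattice eps"
    and d: "dist i j = eps" "dist j k = eps" "dist i k = eps"
    unfolding triangles_def by blast
  show thesis using that[OF T _ d] lattice_inter_equilateral_hull[OF assms(1) ijk d] T by blast
qed

lemma triangle_eq_hull_vertices:
  assumes "eps > 0" "T \<in> triangles eps"
  shows "T = convex hull (lattice eps \<inter> T)"
  using triangle_vertices[OF assms] by metis

lemma card_triangle_vertices:
  assumes "eps > 0" "T \<in> triangles eps"
  shows "card (lattice eps \<inter> T) = 3"
proof -
  obtain i j k where "lattice eps \<inter> T = {i, j, k}"
    and "dist i j = eps" "dist j k = eps" "dist i k = eps"
    using triangle_vertices[OF assms] by metis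
  moreover have "i \<noteq> j" "j \<noteq> k" "i \<noteq> k" using calculation(2-4) assms(1) by auto
  ultimately show ?thesis by simp
qed

lemma triangle_third_vertex:
  assumes "eps > 0" "T \<in> triangles eps" "p \<in> lattice eps \<inter> T" "q \<in> lattice eps \<inter> T" "p \<noteq> q"
  obtains r where "lattice eps \<inter> T = {p, q, r}" "dist r p = eps" "dist r q = eps"
proof -
  obtain i j k where V: "lattice eps \<inter> T = {i, j, k}"
    and d: "dist i j = eps" "dist j k = eps" "dist i k = eps"
    using triangle_vertices[OF assms(1,2)] by metis
  have side: "dist a b = eps" if "a \<in> {i, j, k}" "b \<in> {i, j, k}" "a \<noteq> b" for a b
    using that d by (auto simp: dist_commute)
  have "card (lattice eps \<inter> T - {p, q}) = 1"
    using card_triangle_vertices[OF assms(1,2)] assms(3-5) by (simp add: card_Diff_subset)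
  then obtain r where r: "lattice eps \<inter> T - {p, q} = {r}" by (rule card_1_singletonE)
  then have "lattice eps \<inter> T = {p, q, r}" using assms(3,4) by blast
  moreover have "dist r p = eps" "dist r q = eps"
    using r assms(3,4) side unfolding V by blast+
  ultimately show thesis by (rule that)
qed

lemma at_most_two_triangles_on_edge:
  assumes "eps > 0" "T1 \<in> triangles eps" "T2 \<in> triangles eps" "T3 \<in> triangles eps" "p \<noteq> q"
    and "{p, q} \<subseteq> lattice eps \<inter> T1" "{p, q} \<subseteq> lattice eps \<inter> T2" "{p, q} \<subseteq> lattice eps \<inter> T3"
  shows "T1 = T2 \<or> T1 = T3 \<or> T2 = T3"
proof -
  obtain r1 where r1: "lattice eps \<inter> T1 = {p, q, r1}" "dist r1 p = eps" "dist r1 q = eps"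
    using triangle_third_vertex[OF assms(1,2) _ _ assms(5)] assms(6) by blast
  obtain r2 where r2: "lattice eps \<inter> T2 = {p, q, r2}" "dist r2 p = eps" "dist r2 q = eps"
    using triangle_third_vertex[OF assms(1,3) _ _ assms(5)] assms(7) by blast
  obtain r3 where r3: "lattice eps \<inter> T3 = {p, q, r3}" "dist r3 p = eps" "dist r3 q = eps"
    using triangle_third_vertex[OF assms(1,4) _ _ assms(5)] assms(8) by blast
  note triangle_eq_hull_vertices[OF assms(1,2), unfolded r1(1)]
    and triangle_eq_hull_vertices[OF assms(1,3), unfolded r2(1)]
    and triangle_eq_hull_vertices[OF assms(1,4), unfolded r3(1)]
  moreover have "r1 = r2 \<or> r1 = r3 \<or> r2 = r3"
    using two_circles_at_most_two_common_points[OF assms(5) r1(2) r2(2) r3(2) r1(3) r2(3) r3(3)] .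
  ultimately show ?thesis by (elim disjE) simp_all
qed

section \<open>Spin fields and neighbouring triangles\<close>

lemma tri_neighbours_sym: "symp (tri_neighbours eps u)"
  unfolding tri_neighbours_def by (auto intro: sympI simp: Int_commute)

lemma tri_neighbours_common_vertices:
  assumes "eps > 0" "tri_neighbours eps u T T'"
  obtains p q where "lattice eps \<inter> (T \<inter> T') = {p, q}" "p \<noteq> q" "u p = - u q"
proof -
  from assms(2) obtain p q where pq: "T \<inter> T' = closed_segment p q"
    "p \<in> lattice eps" "q \<in> lattice eps" "dist p q = eps" "u p = - u q"
    unfolding tri_neighbours_def frustrated_edges_def by blast
  show thesis
  proof (rule that)
    show "lattice eps \<inter> (T \<inter> T') = {p, q}"
      unfolding pq(1) by (rule lattice_inter_closed_segment[OF assms(1) pq(2-4)])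
    show "p \<noteq> q" using pq(4) assms(1) by auto
  qed (rule pq(5))
qed

lemma tri_neighbours_irrefl:
  assumes "eps > 0"
  shows "\<not> tri_neighbours eps u T T"
proof
  assume nb: "tri_neighbours eps u T T"
  then obtain p q where "lattice eps \<inter> T = {p, q}"
    using tri_neighbours_common_vertices[OF assms] by (metis Int_absorb)
  moreover have "card (lattice eps \<inter> T) = 3"
    using nb card_triangle_vertices[OF assms] unfolding tri_neighbours_def by blast
  ultimately show False by (simp add: card_insert_if split: if_splits)
qed

lemma SF_neq_uminus:
  assumes "u \<in> SF eps \<Omega>" "x \<in> lattice eps"
  shows "u x \<noteq> - u x"
proof
  assume "u x = - u x"
  then have "u x = 0" by (auto simp: prod_eq_iff)
  moreover have "u x \<in> sphere 0 1" using assms unfolding SF_def by blast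
  ultimately show False by simp
qed

lemma tri_neighbours_common_vertices_antipodal:
  assumes "eps > 0" "tri_neighbours eps u T T'"
  shows "lattice eps \<inter> (T \<inter> T') \<in> antipodal_pairs u (lattice eps \<inter> T)"
proof -
  obtain p q where pq: "lattice eps \<inter> (T \<inter> T') = {p, q}" "p \<noteq> q" "u p = - u q"
    using tri_neighbours_common_vertices[OF assms] by blast
  then have "p \<in> lattice eps \<inter> T" "q \<in> lattice eps \<inter> T" by blast+
  with pq show ?thesis unfolding antipodal_pairs_def by blast
qed

lemma tri_neighbours_common_vertices_distinct:
  assumes "eps > 0" "tri_neighbours eps u T T1" "tri_neighbours eps u T T2" "T1 \<noteq> T2"
  shows "lattice eps \<inter> (T \<inter> T1) \<noteq> lattice eps \<inter> (T \<inter> T2)"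
proof
  assume eq: "lattice eps \<inter> (T \<inter> T1) = lattice eps \<inter> (T \<inter> T2)"
  obtain p q where pq: "lattice eps \<inter> (T \<inter> T1) = {p, q}" "p \<noteq> q"
    using tri_neighbours_common_vertices[OF assms(1,2)] by blast
  have "T \<in> triangles eps" "T1 \<in> triangles eps" "T2 \<in> triangles eps"
    using assms(2,3) unfolding tri_neighbours_def by blast+
  moreover have "{p, q} \<subseteq> lattice eps \<inter> T" "{p, q} \<subseteq> lattice eps \<inter> T1" "{p, q} \<subseteq> lattice eps \<inter> T2"
    using pq(1) eq by blast+
  ultimately have "T = T1 \<or> T = T2 \<or> T1 = T2"
    by (rule at_most_two_triangles_on_edge[OF assms(1) _ _ _ pq(2)])
  moreover have "T \<noteq> T1" "T \<noteq> T2"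
    using tri_neighbours_irrefl[OF assms(1)] assms(2,3) by metis+
  ultimately show False using assms(4) by blast
qed

lemma tri_neighbours_max_degree_2:
  assumes "eps > 0" "u \<in> SF eps \<Omega>"
    and "tri_neighbours eps u T T1" "tri_neighbours eps u T T2" "tri_neighbours eps u T T3"
  shows "T1 = T2 \<or> T1 = T3 \<or> T2 = T3"
proof -
  have "T \<in> triangles eps" using assms(3) unfolding tri_neighbours_def by blast
  then obtain a b c where V: "lattice eps \<inter> T = {a, b, c}"
    using triangle_vertices[OF assms(1)] by metis
  have nonzero: "u x \<noteq> - u x" if "x \<in> {a, b, c}" for x
  proof -
    have "x \<in> lattice eps" using that V by blast
    then show ?thesis by (rule SF_neq_uminus[OF assms(2)])
  qed
  have edge: "lattice eps \<inter> (T \<inter> T') \<in> antipodal_pairs u {a, b, c}"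
    if "tri_neighbours eps u T T'" for T'
    using tri_neighbours_common_vertices_antipodal[OF assms(1) that] unfolding V .
  have "lattice eps \<inter> (T \<inter> T1) = lattice eps \<inter> (T \<inter> T2) \<or>
      lattice eps \<inter> (T \<inter> T1) = lattice eps \<inter> (T \<inter> T3) \<or>
      lattice eps \<inter> (T \<inter> T2) = lattice eps \<inter> (T \<inter> T3)"
    by (rule antipodal_pairs_of_triple[OF nonzero edge[OF assms(3)] edge[OF assms(4)]
          edge[OF assms(5)]])
  then show ?thesis
    using tri_neighbours_common_vertices_distinct[OF assms(1)] assms(3-5) by metis
qed

lemma tri_neighbours_unique_at_exotic_vertex:
  assumes "eps > 0" "T \<in> triangles eps"
    and "w \<in> u ` (lattice eps \<inter> T)" "- w \<in> u ` (lattice eps \<inter> T)" "w \<noteq> - w"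
    and "x \<in> lattice eps \<inter> T" "u x \<notin> {w, - w}"
  shows "\<exists>\<^sub>\<le>\<^sub>1 T'. tri_neighbours eps u T T'"
proof (rule Uniq_I, rule ccontr)
  fix T1 T2 assume nb: "tri_neighbours eps u T T1" "tri_neighbours eps u T T2" and "T1 \<noteq> T2"
  have "lattice eps \<inter> (T \<inter> Ti) = lattice eps \<inter> T - {x}" if "tri_neighbours eps u T Ti" for Ti
    using antipodal_pairs_avoid_exotic[OF card_triangle_vertices[OF assms(1,2)] assms(3-7)]
      tri_neighbours_common_vertices_antipodal[OF assms(1) that] by blast
  then show False
    using tri_neighbours_common_vertices_distinct[OF assms(1) nb \<open>T1 \<noteq> T2\<close>] nb by blast
qed

lemma antipodal_values_tri_neighbours:
  assumes "eps > 0" "u \<in> SF eps \<Omega>" "tri_neighbours eps u T T'"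
    and "w \<in> u ` (lattice eps \<inter> T)" "- w \<in> u ` (lattice eps \<inter> T)" "w \<noteq> - w"
  shows "w \<in> u ` (lattice eps \<inter> T') \<and> - w \<in> u ` (lattice eps \<inter> T')"
proof -
  obtain p q where pq: "lattice eps \<inter> (T \<inter> T') = {p, q}" "p \<noteq> q" "u p = - u q"
    using tri_neighbours_common_vertices[OF assms(1,3)] by blast
  have card: "card (lattice eps \<inter> T) = 3"
    using assms(3) card_triangle_vertices[OF assms(1)] unfolding tri_neighbours_def by blast
  have p: "p \<in> lattice eps \<inter> T" "p \<in> lattice eps \<inter> T'"
    and q: "q \<in> lattice eps \<inter> T" "q \<in> lattice eps \<inter> T'"
    using pq(1) by blast+
  have "u p \<in> {w, - w}"
  proof (rule ccontr)
    assume "u p \<notin> {w, - w}"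
    moreover have "u q \<notin> {w, - w}" using calculation pq(3) by (auto simp: minus_equation_iff)
    ultimately have "q = p" using exotic_vertex_unique[OF card assms(4-6) p(1)] q(1) by blast
    then show False using pq(2) by simp
  qed
  then have "{w, - w} = {u p, u q}" using pq(3) by auto
  then show ?thesis using p(2) q(2) by blast
qed

lemma antipodal_values_rtranclp_tri_neighbours:
  assumes "eps > 0" "u \<in> SF eps \<Omega>" "(tri_neighbours eps u)\<^sup>*\<^sup>* T0 T"
    and "w \<in> u ` (lattice eps \<inter> T0)" "- w \<in> u ` (lattice eps \<inter> T0)" "w \<noteq> - w"
  shows "w \<in> u ` (lattice eps \<inter> T) \<and> - w \<in> u ` (lattice eps \<inter> T)"
  using assms(3)
proof (induction rule: rtranclp_induct)
  case base
  then show ?case using assms(4,5) by blast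
next
  case (step T T')
  then show ?case using antipodal_values_tri_neighbours[OF assms(1,2) step(2) _ _ assms(6)] by blast
qed

lemma exotic_values_card_le_2:
  assumes "eps > 0" "u \<in> SF eps \<Omega>" "C \<subseteq> triangles eps"
    and connected: "\<And>T1 T2. T1 \<in> C \<Longrightarrow> T2 \<in> C \<Longrightarrow> (tri_neighbours eps u)\<^sup>*\<^sup>* T1 T2"
    and w: "\<And>T. T \<in> C \<Longrightarrow> w \<in> u ` (lattice eps \<inter> T)"
    and minus_w: "\<And>T. T \<in> C \<Longrightarrow> - w \<in> u ` (lattice eps \<inter> T)"
    and "w \<noteq> - w"
  defines "X \<equiv> u ` (lattice eps \<inter> \<Union>C) - {w, - w}"
  shows "finite X \<and> card X \<le> 2"
proof (rule finite_card_le_2_if_no_three_distinct)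
  have tri: "A \<in> triangles eps" if "A \<in> C" for A
    using that assms(3) by blast
  have one_exotic: "c' = c"
    if "A \<in> C" "c \<in> lattice eps \<inter> A" "u c \<notin> {w, - w}" "c' \<in> lattice eps \<inter> A" "u c' \<notin> {w, - w}"
    for A c c'
    by (rule exotic_vertex_unique[OF card_triangle_vertices[OF assms(1) tri[OF that(1)]]
          w[OF that(1)] minus_w[OF that(1)] \<open>w \<noteq> - w\<close> that(2-5)])
  have leaf: "\<exists>\<^sub>\<le>\<^sub>1 T'. tri_neighbours eps u A T'"
    if "A \<in> C" "c \<in> lattice eps \<inter> A" "u c \<notin> {w, - w}" for A c
    by (rule tri_neighbours_unique_at_exotic_vertex[OF assms(1) tri[OF that(1)]
          w[OF that(1)] minus_w[OF that(1)] \<open>w \<noteq> - w\<close> that(2,3)])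
  fix x1 x2 x3 assume "x1 \<in> X" "x2 \<in> X" "x3 \<in> X"
  then obtain A1 A2 A3 c1 c2 c3 where A: "A1 \<in> C" "A2 \<in> C" "A3 \<in> C"
    and c: "c1 \<in> lattice eps \<inter> A1" "c2 \<in> lattice eps \<inter> A2" "c3 \<in> lattice eps \<inter> A3"
    and uc: "u c1 = x1" "u c2 = x2" "u c3 = x3"
    and exotic: "u c1 \<notin> {w, - w}" "u c2 \<notin> {w, - w}" "u c3 \<notin> {w, - w}"
    unfolding X_def by blast
  show "x1 = x2 \<or> x1 = x3 \<or> x2 = x3"
  proof (cases "A2 = A1 \<or> A3 = A1")
    case True
    then show ?thesis
      using one_exotic[OF A(1) c(1) exotic(1), of c2] one_exotic[OF A(1) c(1) exotic(1), of c3]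
        c(2,3) exotic(2,3) uc
      by (elim disjE) simp_all
  next
    case False
    have "A2 = A3"
    proof (rule leaf_reachable_from_leaf_unique[OF tri_neighbours_sym, where x = A1])
      show "y1 = y2 \<or> y1 = y3 \<or> y2 = y3"
        if "tri_neighbours eps u b y1" "tri_neighbours eps u b y2" "tri_neighbours eps u b y3"
        for b y1 y2 y3
        by (rule tri_neighbours_max_degree_2[OF assms(1,2) that])
    qed (use False leaf[OF A(1) c(1) exotic(1)] leaf[OF A(2) c(2) exotic(2)]
          leaf[OF A(3) c(3) exotic(3)] connected[OF A(1,2)] connected[OF A(1,3)] in auto)
    then have "c3 = c2" using one_exotic[OF A(2) c(2) exotic(2)] c(3) exotic(3) by simp
    then show ?thesis using uc by simp
  qed
qed

lemma pw_connected_family_antipodal_values: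
  assumes "eps > 0" "u \<in> SF eps \<Omega>"
    and connected: "\<And>T1 T2. T1 \<in> C \<Longrightarrow> T2 \<in> C \<Longrightarrow> (tri_neighbours eps u)\<^sup>*\<^sup>* T1 T2"
    and "T0 \<in> C" "tri_neighbours eps u T0 T1"
  obtains w where "w \<noteq> - w" "\<And>T. T \<in> C \<Longrightarrow> w \<in> u ` (lattice eps \<inter> T)"
    "\<And>T. T \<in> C \<Longrightarrow> - w \<in> u ` (lattice eps \<inter> T)"
proof -
  obtain p q where pq: "lattice eps \<inter> (T0 \<inter> T1) = {p, q}" "u p = - u q"
    using tri_neighbours_common_vertices[OF assms(1,5)] by metis
  have "p \<in> lattice eps \<inter> T0" "q \<in> lattice eps \<inter> T0" using pq(1) by blast+
  moreover have "- u p = u q" unfolding pq(2) by simp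
  ultimately have "u p \<in> u ` (lattice eps \<inter> T0)" "- u p \<in> u ` (lattice eps \<inter> T0)" by simp_all
  moreover have "u p \<noteq> - u p" using SF_neq_uminus[OF assms(2)] \<open>p \<in> lattice eps \<inter> T0\<close> by blast
  ultimately show thesis
    using that antipodal_values_rtranclp_tri_neighbours[OF assms(1,2) connected[OF assms(4)]]
    by blast
qed

lemma pw_connected_family_values_card_le_4:
  assumes "eps > 0" "u \<in> SF eps \<Omega>" "pw_connected_family eps u C"
  defines "V \<equiv> u ` (lattice eps \<inter> \<Union>C)"
  shows "finite V \<and> card V \<le> 4"
proof -
  have C: "C \<subseteq> triangles eps"
    and connected: "\<And>T1 T2. T1 \<in> C \<Longrightarrow> T2 \<in> C \<Longrightarrow> (tri_neighbours eps u)\<^sup>*\<^sup>* T1 T2"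
    using assms(3) unfolding pw_connected_family_def tri_connected_def by blast+
  show ?thesis
  proof (cases "\<exists>T0\<in>C. \<exists>T1. tri_neighbours eps u T0 T1")
    case True
    then obtain w where "w \<noteq> - w" "\<And>T. T \<in> C \<Longrightarrow> w \<in> u ` (lattice eps \<inter> T)"
      "\<And>T. T \<in> C \<Longrightarrow> - w \<in> u ` (lattice eps \<inter> T)"
      using pw_connected_family_antipodal_values[OF assms(1,2) connected] by metis
    then have "finite (V - {w, - w})" "card (V - {w, - w}) \<le> 2"
      using exotic_values_card_le_2[OF assms(1,2) C connected] unfolding V_def by blast+
    moreover have "card V - card {w, - w} \<le> card (V - {w, - w})"
      by (rule diff_card_le_card_Diff) simp
    moreover have "card {w, - w} \<le> 2" by (simp add: card_insert_if)
    ultimately show ?thesis by simp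
  next
    case False
    have single: "T = T0" if "T0 \<in> C" "T \<in> C" for T0 T
      using connected[OF that] False that(1) by (auto elim: converse_rtranclpE)
    show ?thesis
    proof (cases "C = {}")
      case False
      then obtain T0 where "T0 \<in> C" by blast
      then have "V = u ` (lattice eps \<inter> T0)" unfolding V_def using single by blast
      moreover have "card (lattice eps \<inter> T0) = 3"
        using card_triangle_vertices[OF assms(1)] C \<open>T0 \<in> C\<close> by blast
      ultimately show ?thesis
        using card_image_le[of "lattice eps \<inter> T0" u] by (simp add: card_ge_0_finite)
    qed (simp add: V_def)
  qed
qed

theorem lemma5p3:
  fixes eps :: real and \<Omega> :: "pt set" and u :: "pt \<Rightarrow> spin" and R :: "pt set"
  assumes "eps > 0" and "bounded \<Omega>" and "open \<Omega>"
    and "u \<in> SF eps \<Omega>" and "R \<in> admissible_regions eps u"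
  shows "finite (u ` (lattice eps \<inter> R)) \<and> card (u ` (lattice eps \<inter> R)) \<le> 4"
proof -
  obtain C where "R = \<Union>C" "pw_connected_family eps u C"
    using assms(5) unfolding admissible_regions_def by blast
  then show ?thesis using pw_connected_family_values_card_le_4[OF assms(1,4)] by blast
qed

end
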